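(* Let $f_i\in\mathbb{Z}[x_1,\dots,x_n]$ ($i\in[m]$) have degree one and $g_j\in\mathbb{Z}[x_1,\dots,x_n]$ ($j\in[\ell]$) have degree at most an integer $d\ge1$, all with coefficients of absolute value at most $H$. Let $\delta$ be a positive integer. Let $P:=\{x\in\mathbb{R}^n: f_i(x)\le 0,\ i\in[m]\}$ and $$R:=\{x\in P: g_j(x)\le 0,\ j\in[\ell]\},\qquad S:=\{x\in P:\ \ell\delta g_j(x)\le 1,\ j\in[\ell]\}.$$ Assume $P$ is bounded. If $R$ is nonempty, then $S$ contains a rational vector whose encoding size is bounded by a polynomial in $n,d,\log\ell,\log H,\log\delta$. *)

theory Defs
  imports Complex_Main
begin

definition monomials_upto :: "nat \<Rightarrow> nat \<Rightarrow> (nat \<Rightarrow> nat) set" where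
  "monomials_upto n d = {\<alpha>. (\<forall>i\<ge>n. \<alpha> i = 0) \<and> (\<Sum>i<n. \<alpha> i) \<le> d}"

text \<open>Evaluation of the integer polynomial of degree at most d with coefficient
  function c (coefficient of the monomial with exponent vector alpha) at x.\<close>
definition poly_eval :: "nat \<Rightarrow> nat \<Rightarrow> ((nat \<Rightarrow> nat) \<Rightarrow> int) \<Rightarrow> (nat \<Rightarrow> real) \<Rightarrow> real" where
  "poly_eval n d c x = (\<Sum>\<alpha>\<in>monomials_upto n d. real_of_int (c \<alpha>) * (\<Prod>i<n. x i ^ \<alpha> i))"

definition aff_eval :: "nat \<Rightarrow> (nat \<Rightarrow> int) \<Rightarrow> int \<Rightarrow> (nat \<Rightarrow> real) \<Rightarrow> real" where
  "aff_eval n a b x = (\<Sum>i<n. real_of_int (a i) * x i) + real_of_int b"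

text \<open>Binary encoding sizes (Schrijver's convention).\<close>
definition int_size :: "int \<Rightarrow> nat" where
  "int_size z = 1 + nat \<lceil>log 2 (real_of_int \<bar>z\<bar> + 1)\<rceil>"

definition rat_size :: "rat \<Rightarrow> nat" where
  "rat_size r = (case quotient_of r of (p, q) \<Rightarrow> int_size p + int_size q)"

definition vec_size :: "nat \<Rightarrow> (nat \<Rightarrow> rat) \<Rightarrow> nat" where
  "vec_size n q = n + (\<Sum>i<n. rat_size (q i))"

end

theory Submission
  imports Defs "Jordan_Normal_Form.Determinant"
begin

text \<open>By Caratheodory's theorem every point \<open>x\<close> of the bounded polyhedron \<open>P\<close> is a convex
  combination of at most \<open>n + 1\<close> of its vertices, and by Cramer's rule every vertex has a common
  denominator and numerators bounded by \<open>Bd = n! (H + 1)\<^sup>n\<close>. Rounding the convex weights to multiples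
  of \<open>1 / N\<close> keeps the point in \<open>P\<close>, moves it by at most \<open>2 n Bd / N\<close> in each coordinate, and gives it
  the common denominator \<open>N Bd\<^sup>n\<^sup>+\<^sup>1\<close>. On the box of radius \<open>Bd\<close> containing \<open>P\<close> every \<open>g\<^sub>j\<close> is Lipschitz
  with a constant of bit size polynomial in \<open>n, d, log H\<close>, so for a suitable \<open>N\<close> of polynomial bit size
  the rounded image of a point of \<open>R\<close> lies in \<open>S\<close>.\<close>

section \<open>Integer determinants\<close>

lemma det_Ints_abs_le:
  fixes M :: "real mat"
  assumes M: "M \<in> carrier_mat n n"
    and entries: "\<And>i j. i < n \<Longrightarrow> j < n \<Longrightarrow> M $$ (i,j) \<in> \<int> \<and> \<bar>M $$ (i,j)\<bar> \<le> h"
  shows "det M \<in> \<int> \<and> \<bar>det M\<bar> \<le> fact n * h ^ n"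
proof -
  have det_M: "det M = (\<Sum>p\<in>{p. p permutes {0..<n}}. signof p * (\<Prod>i = 0..<n. M $$ (i, p i)))"
    using det_def'[OF M] .
  have perm_less: "p i < n" if "p permutes {0..<n}" "i < n" for p i
    using that permutes_in_image by fastforce
  have "det M \<in> \<int>" unfolding det_M
    by (intro Ints_sum Ints_mult Ints_prod) (auto simp: perm_less entries)
  moreover have "\<bar>det M\<bar> \<le> fact n * h ^ n"
  proof -
    have "\<bar>det M\<bar> \<le> (\<Sum>p\<in>{p. p permutes {0..<n}}. \<bar>signof p * (\<Prod>i = 0..<n. M $$ (i, p i))\<bar>)"
      unfolding det_M by (rule sum_abs)
    also have "\<dots> \<le> (\<Sum>p\<in>{p. p permutes {0..<n}}. h ^ n)"
    proof (rule sum_mono)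
      fix p assume p: "p \<in> {p. p permutes {0..<n}}"
      have "\<bar>signof p * (\<Prod>i = 0..<n. M $$ (i, p i))\<bar> = (\<Prod>i = 0..<n. \<bar>M $$ (i, p i)\<bar>)"
        by (simp add: abs_mult abs_prod sign_def)
      also have "\<dots> \<le> (\<Prod>i = 0..<n. h)"
        by (rule prod_mono) (use p perm_less entries in auto)
      finally show "\<bar>signof p * (\<Prod>i = 0..<n. M $$ (i, p i))\<bar> \<le> h ^ n" by simp
    qed
    also have "\<dots> = fact n * h ^ n"
      by (simp add: card_permutations)
    finally show ?thesis .
  qed
  ultimately show ?thesis ..
qed

section \<open>Polyhedra and convex combinations\<close>

definition lin_eval :: "nat \<Rightarrow> (nat \<Rightarrow> int) \<Rightarrow> (nat \<Rightarrow> real) \<Rightarrow> real" where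
  "lin_eval n a x = (\<Sum>k<n. real_of_int (a k) * x k)"

lemma aff_eval_eq_lin_eval: "aff_eval n a b x = lin_eval n a x + real_of_int b"
  by (simp add: aff_eval_def lin_eval_def)

lemma aff_eval_add_scaled:
  "aff_eval n a b (\<lambda>k. x k + t * u k) = aff_eval n a b x + t * lin_eval n a u"
  by (simp add: aff_eval_def lin_eval_def sum.distrib algebra_simps sum_distrib_left)

lemma aff_eval_diff: "aff_eval n a b x - aff_eval n a b y = lin_eval n a (\<lambda>k. x k - y k)"
  by (simp add: aff_eval_def lin_eval_def sum_subtractf algebra_simps)

lemma aff_eval_convex_comb:
  assumes "finite T" "(\<Sum>t\<in>T. \<mu> t) = 1"
  shows "aff_eval n a b (\<lambda>k. \<Sum>t\<in>T. \<mu> t * v t k) = (\<Sum>t\<in>T. \<mu> t * aff_eval n a b (v t))"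
proof -
  have "aff_eval n a b (\<lambda>k. \<Sum>t\<in>T. \<mu> t * v t k)
      = (\<Sum>t\<in>T. \<Sum>k<n. \<mu> t * (real_of_int (a k) * v t k)) + (\<Sum>t\<in>T. \<mu> t) * real_of_int b"
    using assms(2) by (simp add: aff_eval_def sum_distrib_left sum.swap[of _ T] mult_ac)
  also have "\<dots> = (\<Sum>t\<in>T. \<mu> t * aff_eval n a b (v t))"
    by (simp add: aff_eval_def sum_distrib_left sum_distrib_right sum.distrib algebra_simps)
  finally show ?thesis .
qed

definition polyhedron :: "nat \<Rightarrow> nat \<Rightarrow> (nat \<Rightarrow> nat \<Rightarrow> int) \<Rightarrow> (nat \<Rightarrow> int) \<Rightarrow> (nat \<Rightarrow> real) set" where
  "polyhedron n m A B = {x. (\<forall>i\<ge>n. x i = 0) \<and> (\<forall>i<m. aff_eval n (A i) (B i) x \<le> 0)}"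

lemma polyhedron_ex_coord_neq:
  assumes "x \<in> polyhedron n m A B" "v \<in> polyhedron n m A B" "x \<noteq> v"
  shows "\<exists>k<n. x k \<noteq> v k"
proof (rule ccontr)
  assume "\<not> ?thesis"
  then have "x k = v k" for k using assms(1,2) by (cases "k < n") (auto simp: polyhedron_def)
  with assms(3) show False by blast
qed

lemma convex_comb_in_polyhedron:
  assumes "finite T" "(\<Sum>t\<in>T. \<mu> t) = 1" "\<And>t. t \<in> T \<Longrightarrow> 0 \<le> \<mu> t \<and> v t \<in> polyhedron n m A B"
  shows "(\<lambda>k. \<Sum>t\<in>T. \<mu> t * v t k) \<in> polyhedron n m A B"
  unfolding polyhedron_def
proof (intro CollectI conjI allI impI)
  fix i assume "n \<le> i"
  then show "(\<Sum>t\<in>T. \<mu> t * v t i) = 0" using assms(3) by (simp add: polyhedron_def)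
next
  fix i assume i: "i < m"
  have "(\<Sum>t\<in>T. \<mu> t * aff_eval n (A i) (B i) (v t)) \<le> 0"
    by (rule sum_nonpos) (use assms(3) i in \<open>auto simp: polyhedron_def intro!: mult_nonneg_nonpos\<close>)
  then show "aff_eval n (A i) (B i) (\<lambda>k. \<Sum>t\<in>T. \<mu> t * v t k) \<le> 0"
    by (simp add: aff_eval_convex_comb[OF assms(1,2)])
qed

lemma abs_convex_comb_le:
  fixes \<mu> :: "'t \<Rightarrow> real"
  assumes "(\<Sum>t\<in>T. \<mu> t) = 1" "\<And>t. t \<in> T \<Longrightarrow> 0 \<le> \<mu> t \<and> \<bar>v t\<bar> \<le> M"
  shows "\<bar>\<Sum>t\<in>T. \<mu> t * v t\<bar> \<le> M"
proof -
  have "\<bar>\<Sum>t\<in>T. \<mu> t * v t\<bar> \<le> (\<Sum>t\<in>T. \<mu> t * M)"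
    by (rule order_trans[OF sum_abs sum_mono]) (use assms(2) in \<open>auto simp: abs_mult intro: mult_left_mono\<close>)
  also have "\<dots> = M" using assms(1) by (simp add: sum_distrib_right[symmetric])
  finally show ?thesis .
qed

text \<open>If \<open>y = x + t (x - v\<^sub>0)\<close> is a convex combination of the \<open>v s\<close>, then so is
  \<open>x = (t v\<^sub>0 + y) / (1 + t)\<close> of \<open>v\<^sub>0\<close> and the \<open>v s\<close>.\<close>
lemma convex_comb_prepend:
  fixes \<mu> :: "nat \<Rightarrow> real"
  assumes t: "t \<ge> 0" and \<mu>: "(\<Sum>s\<le>K. \<mu> s) = 1" "\<forall>s\<le>K. 0 \<le> \<mu> s"
    and y: "\<forall>k. x k + t * (x k - v\<^sub>0 k) = (\<Sum>s\<le>K. \<mu> s * v s k)"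
  shows "\<exists>\<mu>' v'. (\<forall>s\<le>Suc K. 0 \<le> \<mu>' s \<and> v' s \<in> insert v\<^sub>0 (v ` {..K})) \<and>
    (\<Sum>s\<le>Suc K. \<mu>' s) = 1 \<and> (\<forall>k. x k = (\<Sum>s\<le>Suc K. \<mu>' s * v' s k))"
proof -
  define \<mu>' where "\<mu>' = (\<lambda>s. case s of 0 \<Rightarrow> t / (1 + t) | Suc s' \<Rightarrow> \<mu> s' / (1 + t))"
  define v' where "v' = (\<lambda>s. case s of 0 \<Rightarrow> v\<^sub>0 | Suc s' \<Rightarrow> v s')"
  have t1: "1 + t > 0" using t by simp
  have "\<forall>s\<le>Suc K. 0 \<le> \<mu>' s \<and> v' s \<in> insert v\<^sub>0 (v ` {..K})"
    using t \<mu>(2) by (auto simp: \<mu>'_def v'_def split: nat.split)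
  moreover have "(\<Sum>s\<le>Suc K. \<mu>' s) = 1"
    using \<mu>(1) t1 by (subst sum.atMost_Suc_shift) (simp add: \<mu>'_def sum_divide_distrib[symmetric] field_simps)
  moreover have "x k = (\<Sum>s\<le>Suc K. \<mu>' s * v' s k)" for k
  proof -
    have "(\<Sum>s\<le>Suc K. \<mu>' s * v' s k) = (t * v\<^sub>0 k + (\<Sum>s\<le>K. \<mu> s * v s k)) / (1 + t)"
      by (subst sum.atMost_Suc_shift) (simp add: \<mu>'_def v'_def sum_divide_distrib add_divide_distrib)
    also have "\<dots> = x k" using t1 by (simp add: field_simps flip: y[rule_format])
    finally show ?thesis by simp
  qed
  ultimately show ?thesis by blast
qed

section \<open>Rounding convex combinations of rational points\<close>

definition small_rational_point :: "nat \<Rightarrow> nat \<Rightarrow> (nat \<Rightarrow> real) \<Rightarrow> bool" where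
  "small_rational_point n Bd v \<longleftrightarrow> (\<forall>k\<ge>n. v k = 0) \<and> (\<exists>D::int. 1 \<le> D \<and> D \<le> int Bd \<and>
      (\<forall>k<n. \<exists>w::int. v k * of_int D = of_int w \<and> \<bar>w\<bar> \<le> int Bd))"

lemma small_rational_point_abs_le:
  assumes "small_rational_point n Bd v"
  shows "\<bar>v k\<bar> \<le> real Bd"
proof (cases "k < n")
  case True
  with assms obtain D w :: int where Dw: "1 \<le> D" "v k * of_int D = of_int w" "\<bar>w\<bar> \<le> int Bd"
    unfolding small_rational_point_def by blast
  have "\<bar>v k\<bar> \<le> \<bar>v k\<bar> * of_int D" using Dw(1) by (simp add: mult_le_cancel_left1)
  also have "\<dots> = \<bar>of_int w\<bar>" using Dw(1,2) by (simp flip: Dw(2) add: abs_mult)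
  also have "\<dots> \<le> real Bd" using Dw(3) by (simp flip: of_int_abs)
  finally show ?thesis .
qed (use assms in \<open>simp add: small_rational_point_def\<close>)

lemma small_rational_point_denominator:
  assumes "small_rational_point n Bd v"
  obtains D :: int where "1 \<le> D" "D \<le> int Bd" "\<And>k. v k * of_int D \<in> \<int>"
proof -
  from assms obtain D :: int where D: "1 \<le> D" "D \<le> int Bd"
      "\<forall>k<n. \<exists>w::int. v k * of_int D = of_int w" "\<forall>k\<ge>n. v k = 0"
    unfolding small_rational_point_def by blast
  have "v k * of_int D \<in> \<int>" for k
    using D(3,4) by (cases "k < n") (auto intro: Ints_of_int)
  with D(1,2) show thesis by (rule that)
qed

lemma convex_comb_common_denominator:
  assumes v: "\<forall>s\<le>K. small_rational_point n Bd (v s)" and N: "0 < N"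
  shows "\<exists>D::int. 1 \<le> D \<and> D \<le> int N * int Bd ^ (K + 1) \<and>
    (\<forall>k. (\<Sum>s\<le>K. real (a s) / real N * v s k) * of_int D \<in> \<int>)"
proof -
  have "\<forall>s\<in>{..K}. \<exists>D::int. 1 \<le> D \<and> D \<le> int Bd \<and> (\<forall>k. v s k * of_int D \<in> \<int>)"
    using v small_rational_point_denominator by (metis atMost_iff)
  then obtain Ds :: "nat \<Rightarrow> int"
    where "\<forall>s\<in>{..K}. 1 \<le> Ds s \<and> Ds s \<le> int Bd \<and> (\<forall>k. v s k * of_int (Ds s) \<in> \<int>)"
    by (rule bchoice[THEN exE])
  then have Ds: "1 \<le> Ds s" "Ds s \<le> int Bd" "v s k * of_int (Ds s) \<in> \<int>" if "s \<le> K" for s k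
    using that by auto
  define D where "D = int N * (\<Prod>s\<le>K. Ds s)"
  have "1 \<le> (\<Prod>s\<le>K. Ds s)" using Ds by (intro prod_ge_1) auto
  then have "1 * 1 \<le> D" unfolding D_def using N by (intro mult_mono) auto
  moreover have "(\<Prod>s\<le>K. Ds s) \<le> (\<Prod>s\<le>K. int Bd)"
  proof (rule prod_mono)
    fix s assume "s \<in> {..K}"
    then show "0 \<le> Ds s \<and> Ds s \<le> int Bd" using Ds(1)[of s] Ds(2)[of s] by simp
  qed
  then have "(\<Prod>s\<le>K. Ds s) \<le> int Bd ^ (K + 1)" by simp
  then have "D \<le> int N * int Bd ^ (K + 1)" by (simp add: D_def mult_left_mono)
  moreover have "(\<Sum>s\<le>K. real (a s) / real N * v s k) * of_int D \<in> \<int>" for k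
  proof -
    have "(\<Sum>s\<le>K. real (a s) / real N * v s k) * of_int D
        = (\<Sum>s\<le>K. real (a s) * (v s k * of_int (Ds s)) * of_int (\<Prod>r\<in>{..K}-{s}. Ds r))"
      unfolding sum_distrib_right
    proof (rule sum.cong)
      fix s assume "s \<in> {..K}"
      then have "(\<Prod>r\<le>K. Ds r) = Ds s * (\<Prod>r\<in>{..K}-{s}. Ds r)" by (simp add: prod.remove)
      then show "real (a s) / real N * v s k * of_int D
          = real (a s) * (v s k * of_int (Ds s)) * of_int (\<Prod>r\<in>{..K}-{s}. Ds r)"
        using N by (simp add: D_def)
    qed simp
    also have "\<dots> \<in> \<int>"
    proof (rule Ints_sum)
      fix s assume "s \<in> {..K}"
      then have "v s k * of_int (Ds s) \<in> \<int>" by (simp add: Ds(3))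
      then show "real (a s) * (v s k * of_int (Ds s)) * of_int (\<Prod>r\<in>{..K}-{s}. Ds r) \<in> \<int>"
        by (rule Ints_mult[OF Ints_mult[OF Ints_of_nat] Ints_of_int])
    qed
    finally show ?thesis .
  qed
  ultimately show ?thesis by auto
qed

text \<open>Round \<open>N \<mu>\<^sub>1, \<dots>, N \<mu>\<^sub>K\<close> down and give the remainder to \<open>\<mu>\<^sub>0\<close>; each rounding error is below 1
  and \<open>\<mu>\<^sub>0\<close> collects their sum.\<close>
lemma round_convex_weights:
  fixes \<mu> :: "nat \<Rightarrow> real"
  assumes \<mu>: "\<forall>s\<le>K. 0 \<le> \<mu> s" "(\<Sum>s\<le>K. \<mu> s) = 1"
  shows "\<exists>a::nat \<Rightarrow> nat. (\<Sum>s\<le>K. a s) = N \<and> (\<Sum>s\<le>K. \<bar>real (a s) - real N * \<mu> s\<bar>) \<le> 2 * real K"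
proof -
  define f where "f = (\<lambda>s. nat \<lfloor>real N * \<mu> (Suc s)\<rfloor>)"
  define err where "err = (\<lambda>s. real N * \<mu> (Suc s) - real (f s))"
  have err: "0 \<le> err s \<and> err s \<le> 1" if "s < K" for s
  proof -
    have "0 \<le> real N * \<mu> (Suc s)" using \<mu>(1) that by simp
    then show ?thesis by (simp add: err_def f_def) linarith
  qed
  have err_sum: "0 \<le> (\<Sum>s<K. err s)" using err by (intro sum_nonneg) auto
  have rest: "(\<Sum>s<K. \<mu> (Suc s)) = 1 - \<mu> 0" using \<mu>(2) by (simp add: sum.atMost_shift)
  have "real (\<Sum>s<K. f s) = real N * (1 - \<mu> 0) - (\<Sum>s<K. err s)"
    by (simp add: err_def sum_subtractf rest flip: sum_distrib_left)
  also have "\<dots> \<le> real N"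
  proof -
    have "real N * (1 - \<mu> 0) \<le> real N" using \<mu>(1) by (simp add: mult_left_le)
    then show ?thesis using err_sum by linarith
  qed
  finally have F: "(\<Sum>s<K. f s) \<le> N" by linarith
  define a where "a = (\<lambda>s. case s of 0 \<Rightarrow> N - (\<Sum>s<K. f s) | Suc s \<Rightarrow> f s)"
  have "(\<Sum>s\<le>K. a s) = N" using F by (simp add: sum.atMost_shift a_def)
  moreover have "(\<Sum>s\<le>K. \<bar>real (a s) - real N * \<mu> s\<bar>) = 2 * (\<Sum>s<K. err s)"
  proof -
    have "real (a 0) - real N * \<mu> 0 = (\<Sum>s<K. err s)"
      using F by (simp add: a_def of_nat_diff err_def sum_subtractf rest algebra_simps flip: sum_distrib_left)
    moreover have "\<bar>real (a (Suc s)) - real N * \<mu> (Suc s)\<bar> = err s" if "s < K" for s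
      using err[OF that] by (simp add: a_def err_def)
    ultimately show ?thesis
      using err_sum by (simp add: sum.atMost_shift)
  qed
  moreover have "(\<Sum>s<K. err s) \<le> real K"
    using sum_mono[of "{..<K}" err "\<lambda>_. 1"] err by simp
  ultimately show ?thesis by (intro exI[of _ a]) auto
qed

section \<open>A Lipschitz bound for polynomials\<close>

lemma abs_power_diff_le:
  fixes x y M e :: real
  assumes "\<bar>x\<bar> \<le> M" "\<bar>y\<bar> \<le> M" "1 \<le> M" "\<bar>x - y\<bar> \<le> e"
  shows "\<bar>x ^ a - y ^ a\<bar> \<le> real a * M ^ a * e"
proof (induction a)
  case (Suc a)
  have e: "0 \<le> e" using assms(4) by linarith
  have "\<bar>x ^ Suc a - y ^ Suc a\<bar> = \<bar>x * (x ^ a - y ^ a) + y ^ a * (x - y)\<bar>"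
    by (simp add: algebra_simps)
  also have "\<dots> \<le> \<bar>x\<bar> * \<bar>x ^ a - y ^ a\<bar> + \<bar>y\<bar> ^ a * \<bar>x - y\<bar>"
    by (simp add: abs_mult power_abs order_trans[OF abs_triangle_ineq])
  also have "\<dots> \<le> M * (real a * M ^ a * e) + M ^ a * e"
    by (intro add_mono mult_mono power_mono Suc.IH) (use assms e in auto)
  also have "\<dots> \<le> M * (real a * M ^ a * e) + M ^ Suc a * e"
    using assms(3) e by (simp add: mult_right_mono power_increasing)
  also have "\<dots> = real (Suc a) * M ^ Suc a * e" by (simp add: algebra_simps)
  finally show ?case .
qed simp

lemma abs_monomial_diff_le:
  fixes x y :: "nat \<Rightarrow> real" and M e :: real
  assumes xy: "\<And>i. i < n \<Longrightarrow> \<bar>x i\<bar> \<le> M \<and> \<bar>y i\<bar> \<le> M \<and> \<bar>x i - y i\<bar> \<le> e" and M: "1 \<le> M" and e: "0 \<le> e"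
  shows "\<bar>(\<Prod>i<n. x i ^ \<alpha> i) - (\<Prod>i<n. y i ^ \<alpha> i)\<bar> \<le> real (\<Sum>i<n. \<alpha> i) * M ^ (\<Sum>i<n. \<alpha> i) * e"
  using xy
proof (induction n)
  case (Suc n)
  let ?X = "\<Prod>i<n. x i ^ \<alpha> i" and ?Y = "\<Prod>i<n. y i ^ \<alpha> i" and ?s = "\<Sum>i<n. \<alpha> i" and ?a = "\<alpha> n"
  have xy_n: "\<bar>x n\<bar> \<le> M" "\<bar>y n\<bar> \<le> M" "\<bar>x n - y n\<bar> \<le> e" using Suc.prems[of n] by auto
  have "\<bar>?X\<bar> = (\<Prod>i<n. \<bar>x i\<bar> ^ \<alpha> i)" by (simp add: abs_prod power_abs)
  also have "\<dots> \<le> (\<Prod>i<n. M ^ \<alpha> i)" by (intro prod_mono conjI power_mono) (use Suc.prems in auto)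
  finally have X: "\<bar>?X\<bar> \<le> M ^ ?s" by (simp add: power_sum)
  have "\<bar>(\<Prod>i<Suc n. x i ^ \<alpha> i) - (\<Prod>i<Suc n. y i ^ \<alpha> i)\<bar> = \<bar>?X * (x n ^ ?a - y n ^ ?a) + y n ^ ?a * (?X - ?Y)\<bar>"
    by (simp add: algebra_simps)
  also have "\<dots> \<le> \<bar>?X\<bar> * \<bar>x n ^ ?a - y n ^ ?a\<bar> + \<bar>y n\<bar> ^ ?a * \<bar>?X - ?Y\<bar>"
    by (simp add: abs_mult power_abs order_trans[OF abs_triangle_ineq])
  also have "\<dots> \<le> M ^ ?s * (real ?a * M ^ ?a * e) + M ^ ?a * (real ?s * M ^ ?s * e)"
    using Suc xy_n M e
    by (intro add_mono mult_mono X abs_power_diff_le power_mono) (auto intro: mult_nonneg_nonneg)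
  also have "\<dots> = real (?s + ?a) * M ^ (?s + ?a) * e" by (simp add: algebra_simps power_add)
  finally show ?case by simp
qed simp

lemma finite_card_monomials_upto: "finite (monomials_upto n d) \<and> card (monomials_upto n d) \<le> (d + 1) ^ n"
proof -
  let ?r = "\<lambda>\<alpha>::nat \<Rightarrow> nat. restrict \<alpha> {..<n}" and ?B = "PiE {..<n} (\<lambda>_. {..d})"
  have inj: "inj_on ?r (monomials_upto n d)"
  proof
    fix \<alpha> \<beta> assume \<alpha>\<beta>: "\<alpha> \<in> monomials_upto n d" "\<beta> \<in> monomials_upto n d" "?r \<alpha> = ?r \<beta>"
    show "\<alpha> = \<beta>"
    proof
      fix i show "\<alpha> i = \<beta> i"
        using fun_cong[OF \<alpha>\<beta>(3), of i] \<alpha>\<beta>(1,2) by (cases "i < n") (simp_all add: monomials_upto_def)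
    qed
  qed
  have sub: "?r ` monomials_upto n d \<subseteq> ?B"
  proof (rule image_subsetI, rule PiE_I)
    fix \<alpha> i assume "\<alpha> \<in> monomials_upto n d" "i \<in> {..<n}"
    then show "restrict \<alpha> {..<n} i \<in> {..d}"
      using member_le_sum[of i "{..<n}" \<alpha>] by (simp add: monomials_upto_def)
  qed simp
  have "finite ?B" "card ?B = (d + 1) ^ n" by (simp_all add: finite_PiE card_PiE)
  then show ?thesis
    using finite_imageD[OF finite_subset[OF sub] inj] card_inj_on_le[OF inj sub] by simp
qed

lemma abs_poly_eval_diff_le:
  fixes x y :: "nat \<Rightarrow> real" and M e :: real and g :: "(nat \<Rightarrow> nat) \<Rightarrow> int"
  assumes xy: "\<And>i. i < n \<Longrightarrow> \<bar>x i\<bar> \<le> M \<and> \<bar>y i\<bar> \<le> M \<and> \<bar>x i - y i\<bar> \<le> e" and M: "1 \<le> M" and e: "0 \<le> e"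
    and g: "\<forall>\<alpha>\<in>monomials_upto n d. \<bar>g \<alpha>\<bar> \<le> int H"
  shows "\<bar>poly_eval n d g x - poly_eval n d g y\<bar> \<le> real ((d + 1) ^ n) * real H * real d * M ^ d * e"
proof -
  let ?S = "monomials_upto n d" and ?D = "\<lambda>\<alpha>. (\<Prod>i<n. x i ^ \<alpha> i) - (\<Prod>i<n. y i ^ \<alpha> i)"
  have "\<bar>poly_eval n d g x - poly_eval n d g y\<bar> = \<bar>\<Sum>\<alpha>\<in>?S. real_of_int (g \<alpha>) * ?D \<alpha>\<bar>"
    by (simp add: poly_eval_def sum_subtractf algebra_simps)
  also have "\<dots> \<le> (\<Sum>\<alpha>\<in>?S. real H * (real d * M ^ d * e))"
  proof (rule order_trans[OF sum_abs sum_mono])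
    fix \<alpha> assume \<alpha>: "\<alpha> \<in> ?S"
    then have deg: "(\<Sum>i<n. \<alpha> i) \<le> d" by (simp add: monomials_upto_def)
    have "\<bar>?D \<alpha>\<bar> \<le> real (\<Sum>i<n. \<alpha> i) * M ^ (\<Sum>i<n. \<alpha> i) * e"
      by (rule abs_monomial_diff_le[OF xy M e])
    also have "\<dots> \<le> real d * M ^ d * e"
      using deg M e by (intro mult_right_mono mult_mono power_increasing) (auto simp flip: of_nat_sum)
    moreover have "\<bar>real_of_int (g \<alpha>)\<bar> \<le> real H"
      using g \<alpha> of_int_le_iff[of "\<bar>g \<alpha>\<bar>" "int H", where 'a=real] by simp
    ultimately show "\<bar>real_of_int (g \<alpha>) * ?D \<alpha>\<bar> \<le> real H * (real d * M ^ d * e)"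
      unfolding abs_mult by (intro mult_mono) auto
  qed
  also have "\<dots> \<le> real ((d + 1) ^ n) * (real H * (real d * M ^ d * e))"
  proof -
    have "real (card ?S) \<le> real ((d + 1) ^ n)"
      using finite_card_monomials_upto[of n d] by (simp only: of_nat_le_iff)
    then show ?thesis using M e by (simp add: mult_right_mono)
  qed
  finally show ?thesis by (simp add: mult.assoc)
qed

section \<open>Vertices of a bounded integral polyhedron\<close>

definition vertex_bound :: "nat \<Rightarrow> nat \<Rightarrow> nat" where
  "vertex_bound n H = fact n * (H + 1) ^ n"

lemma vertex_bound_pos: "1 \<le> vertex_bound n H"
  unfolding vertex_bound_def using fact_ge_1[of n, where 'a=nat] by (simp add: Suc_le_eq)

lemma det_int_abs_le_vertex_bound:
  fixes M :: "real mat"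
  assumes M: "M \<in> carrier_mat n n"
    and entries: "\<And>i j. i < n \<Longrightarrow> j < n \<Longrightarrow> M $$ (i,j) \<in> \<int> \<and> \<bar>M $$ (i,j)\<bar> \<le> real H"
  obtains D :: int where "det M = of_int D" "\<bar>D\<bar> \<le> int (vertex_bound n H)"
proof -
  obtain D where D: "det M = of_int D"
    using det_Ints_abs_le[OF M entries] by (auto elim: Ints_cases)
  have "fact n * real H ^ n \<le> real (vertex_bound n H)"
    unfolding vertex_bound_def by (simp add: add.commute power_mono)
  then have "real_of_int \<bar>D\<bar> \<le> real (vertex_bound n H)"
    using det_Ints_abs_le[OF M entries] D by simp
  then have "\<bar>D\<bar> \<le> int (vertex_bound n H)" by linarith
  with D show thesis by (rule that)
qed

locale bounded_polyhedron =
  fixes n m :: nat and A :: "nat \<Rightarrow> nat \<Rightarrow> int" and B :: "nat \<Rightarrow> int" and H :: nat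
  assumes row_bound: "\<And>i k. i < m \<Longrightarrow> k < n \<Longrightarrow> \<bar>A i k\<bar> \<le> int H"
    and rhs_bound: "\<And>i. i < m \<Longrightarrow> \<bar>B i\<bar> \<le> int H"
    and bounded: "\<exists>M. \<forall>x\<in>polyhedron n m A B. \<forall>i<n. \<bar>x i\<bar> \<le> M"
begin

abbreviation "P \<equiv> polyhedron n m A B"

definition tight :: "(nat \<Rightarrow> real) \<Rightarrow> nat \<Rightarrow> bool" where
  "tight x i \<longleftrightarrow> aff_eval n (A i) (B i) x = 0"

definition independent_rows :: "nat list \<Rightarrow> bool" where
  "independent_rows c \<longleftrightarrow> set c \<subseteq> {..<m} \<and>
    (\<forall>w::nat \<Rightarrow> real. (\<forall>k<n. (\<Sum>p<length c. w p * of_int (A (c!p) k)) = 0) \<longrightarrow> (\<forall>p<length c. w p = 0))"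

lemma independent_rows_Nil: "independent_rows []"
  by (simp add: independent_rows_def)

lemma independent_rows_snoc:
  assumes c: "independent_rows c" and i: "i < m"
    and orth: "\<forall>p<length c. lin_eval n (A (c!p)) u = 0" and nz: "lin_eval n (A i) u \<noteq> 0"
  shows "independent_rows (c @ [i])"
  unfolding independent_rows_def
proof (intro conjI allI impI)
  show "set (c @ [i]) \<subseteq> {..<m}" using c i by (auto simp: independent_rows_def)
  fix w :: "nat \<Rightarrow> real"
  let ?L = "length c" and ?a = "\<lambda>p. A ((c @ [i]) ! p)"
  assume "\<forall>k<n. (\<Sum>p<length (c @ [i]). w p * of_int (A ((c @ [i]) ! p) k)) = 0"
  then have comb: "(\<Sum>p<Suc ?L. w p * of_int (?a p k)) = 0" if "k < n" for k
    using that by simp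
  have "0 = (\<Sum>k<n. u k * (\<Sum>p<Suc ?L. w p * of_int (?a p k)))"
    by (simp add: comb del: sum.lessThan_Suc)
  also have "\<dots> = (\<Sum>p<Suc ?L. w p * lin_eval n (?a p) u)"
    by (simp add: lin_eval_def sum_distrib_left sum.swap[of _ "{..<n}"] mult_ac del: sum.lessThan_Suc)
  also have "\<dots> = w ?L * lin_eval n (A i) u"
    using orth by (simp add: nth_append)
  finally have last: "w ?L = 0" using nz by simp
  have "\<forall>k<n. (\<Sum>p<?L. w p * of_int (A (c ! p) k)) = 0"
    using comb last by (simp add: nth_append)
  then have "\<forall>p<?L. w p = 0" using c by (auto simp: independent_rows_def)
  with last show "\<And>p. p < length (c @ [i]) \<Longrightarrow> w p = 0" by (auto simp: less_Suc_eq)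
qed

lemma independent_rows_take:
  assumes c: "independent_rows c"
  shows "independent_rows (take j c)"
  unfolding independent_rows_def
proof (intro conjI allI impI)
  show "set (take j c) \<subseteq> {..<m}" using c set_take_subset[of j c] by (auto simp: independent_rows_def)
  fix w :: "nat \<Rightarrow> real"
  let ?L = "length (take j c)"
  assume comb: "\<forall>k<n. (\<Sum>p<?L. w p * of_int (A (take j c ! p) k)) = 0"
  define w' where "w' = (\<lambda>p. if p < ?L then w p else 0)"
  have "(\<Sum>p<length c. w' p * of_int (A (c ! p) k)) = 0" if "k < n" for k
  proof -
    have "(\<Sum>p<length c. w' p * of_int (A (c ! p) k)) = (\<Sum>p<?L. w' p * of_int (A (c ! p) k))"
      by (rule sum.mono_neutral_right) (auto simp: w'_def)
    also have "\<dots> = (\<Sum>p<?L. w p * of_int (A (take j c ! p) k))"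
      by (rule sum.cong) (auto simp: w'_def)
    finally show ?thesis using comb that by simp
  qed
  then have "\<forall>p<length c. w' p = 0" using c by (auto simp: independent_rows_def)
  then show "\<And>p. p < ?L \<Longrightarrow> w p = 0" by (auto simp: w'_def)
qed

lemma det_independent_rows_nonzero:
  assumes c: "independent_rows c" "length c = n"
  shows "det (mat n n (\<lambda>(p,k). real_of_int (A (c!p) k))) \<noteq> 0" (is "det ?M \<noteq> 0")
proof
  have M: "?M \<in> carrier_mat n n" by simp
  assume "det ?M = 0"
  then obtain u where u: "u \<in> carrier_vec n" "u \<noteq> 0\<^sub>v n" "transpose_mat ?M *\<^sub>v u = 0\<^sub>v n"
    using det_0_iff_vec_prod_zero[of "transpose_mat ?M" n] det_transpose[OF M] by auto
  have "(\<Sum>p<length c. u $ p * of_int (A (c!p) k)) = 0" if k: "k < n" for k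
  proof -
    have "0 = (transpose_mat ?M *\<^sub>v u) $ k" using u(3) k by simp
    also have "\<dots> = (\<Sum>p\<in>{0..<n}. ?M $$ (p, k) * u $ p)"
      using k u(1) by (auto simp: scalar_prod_def intro!: sum.cong)
    finally show ?thesis using k c(2) by (simp add: lessThan_atLeast0 mult.commute)
  qed
  then have "\<forall>p<n. u $ p = 0" using c unfolding independent_rows_def by auto
  then have "u = 0\<^sub>v n" using u by (intro eq_vecI) auto
  with u show False by simp
qed

text \<open>By Cramer's rule the coordinates are quotients \<open>det M\<^sub>k / det M\<close> of determinants of
  integer matrices with entries bounded by \<open>H\<close>.\<close>
lemma small_rational_point_if_tight_basis:
  assumes x: "x \<in> P" and c: "independent_rows c" "length c = n"
    and tight: "\<And>p. p < n \<Longrightarrow> tight x (c!p)"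
  shows "small_rational_point n (vertex_bound n H) x"
proof -
  define M where "M = mat n n (\<lambda>(p,k). real_of_int (A (c!p) k))"
  have M: "M \<in> carrier_mat n n" by (simp add: M_def)
  have c_less: "c!p < m" if "p < n" for p
    using c that unfolding independent_rows_def by (auto dest: nth_mem)
  define xv where "xv = vec n x"
  have xv: "xv \<in> carrier_vec n" by (simp add: xv_def)
  have Mx: "M *\<^sub>v xv = vec n (\<lambda>p. - real_of_int (B (c!p)))"
  proof (rule eq_vecI)
    fix p assume "p < dim_vec (vec n (\<lambda>p. - real_of_int (B (c!p))))"
    then have p: "p < n" by simp
    have "(M *\<^sub>v xv) $ p = lin_eval n (A (c!p)) x"
      using p by (simp add: M_def xv_def scalar_prod_def lin_eval_def lessThan_atLeast0)
    also have "\<dots> = - real_of_int (B (c!p))"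
      using tight[OF p] by (simp add: tight_def aff_eval_eq_lin_eval)
    finally show "(M *\<^sub>v xv) $ p = vec n (\<lambda>p. - real_of_int (B (c!p))) $ p" using p by simp
  qed (simp add: M_def)
  have entries_M: "M $$ (i,j) \<in> \<int> \<and> \<bar>M $$ (i,j)\<bar> \<le> real H" if "i < n" "j < n" for i j
    using that row_bound[OF c_less[of i], of j] by (simp add: M_def flip: of_int_abs)
  obtain D where D: "det M = of_int D" "\<bar>D\<bar> \<le> int (vertex_bound n H)"
    using det_int_abs_le_vertex_bound[OF M entries_M] by blast
  have numerator: "\<exists>w::int. x k * of_int \<bar>D\<bar> = of_int w \<and> \<bar>w\<bar> \<le> int (vertex_bound n H)"
    if k: "k < n" for k
  proof -
    define Mk where "Mk = replace_col M (M *\<^sub>v xv) k"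
    have Mk: "Mk \<in> carrier_mat n n" by (simp add: Mk_def replace_col_def M_def)
    have entries_Mk: "Mk $$ (i,j) \<in> \<int> \<and> \<bar>Mk $$ (i,j)\<bar> \<le> real H" if ij: "i < n" "j < n" for i j
      using ij entries_M[OF ij] M rhs_bound[OF c_less[OF ij(1)]]
      by (auto simp: Mk_def replace_col_def Mx simp flip: of_int_abs)
    obtain W where W: "det Mk = of_int W" "\<bar>W\<bar> \<le> int (vertex_bound n H)"
      using det_int_abs_le_vertex_bound[OF Mk entries_Mk] by blast
    have "x k * of_int D = of_int W"
      using cramer_lemma_mat[OF M xv k] k W D by (simp add: Mk_def xv_def)
    then have "x k * of_int \<bar>D\<bar> = of_int (sgn D * W)"
      by (simp add: abs_sgn mult_ac flip: mult.assoc)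
    moreover have "\<bar>sgn D * W\<bar> \<le> int (vertex_bound n H)"
      using W(2) by (simp add: abs_mult abs_sgn_eq)
    ultimately show ?thesis by blast
  qed
  have "D \<noteq> 0" using D(1) det_independent_rows_nonzero[OF c] by (simp add: M_def)
  then show ?thesis unfolding small_rational_point_def
    using x D numerator by (intro conjI exI[of _ "\<bar>D\<bar>"]) (auto simp: polyhedron_def)
qed

lemma small_rational_point_if_tight:
  assumes "x \<in> P" "independent_rows c" "n \<le> length c" "\<forall>p<length c. tight x (c!p)"
  shows "small_rational_point n (vertex_bound n H) x"
  using assms independent_rows_take[of c n]
  by (intro small_rational_point_if_tight_basis[of x "take n c"]) auto

lemma lin_eval_diff_tight: "tight x i \<Longrightarrow> tight v i \<Longrightarrow> lin_eval n (A i) (\<lambda>k. x k - v k) = 0"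
  unfolding tight_def using aff_eval_diff[of n "A i" "B i" x v] by simp

lemma exists_direction_orthogonal_rows:
  assumes "length c < n"
  shows "\<exists>u. (\<forall>k\<ge>n. u k = 0) \<and> (\<exists>k<n. u k \<noteq> 0) \<and> (\<forall>p<length c. lin_eval n (A (c!p)) u = 0)"
proof -
  define M where "M = mat n n (\<lambda>(p,k). if p < length c then real_of_int (A (c!p) k) else 0)"
  have M: "M \<in> carrier_mat n n" by (simp add: M_def)
  have "det M = 0"
    unfolding det_def'[OF M]
  proof (rule sum.neutral, intro ballI)
    fix p assume p: "p \<in> {p. p permutes {0..<n}}"
    have "p (n - 1) < n" using p assms permutes_in_image[of p "{0..<n}" "n - 1"] by auto
    then have "(\<Prod>i = 0..<n. M $$ (i, p i)) = 0"
      using assms by (intro prod_zero bexI[of _ "n - 1"]) (auto simp: M_def)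
    then show "signof p * (\<Prod>i = 0..<n. M $$ (i, p i)) = 0" by simp
  qed
  then obtain v where v: "v \<in> carrier_vec n" "v \<noteq> 0\<^sub>v n" "M *\<^sub>v v = 0\<^sub>v n"
    using det_0_iff_vec_prod_zero[OF M] by auto
  define u where "u = (\<lambda>k. if k < n then v $ k else 0)"
  have "\<exists>k<n. u k \<noteq> 0"
  proof (rule ccontr)
    assume "\<not> ?thesis"
    then have "v = 0\<^sub>v n" using v(1) by (intro eq_vecI) (auto simp: u_def)
    with v(2) show False by simp
  qed
  moreover have "lin_eval n (A (c!p)) u = 0" if p: "p < length c" for p
  proof -
    have "lin_eval n (A (c!p)) u = (M *\<^sub>v v) $ p"
      using p assms v(1) by (auto simp: M_def scalar_prod_def lin_eval_def u_def lessThan_atLeast0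
          intro!: sum.cong)
    then show ?thesis using v(3) p assms by simp
  qed
  ultimately show ?thesis by (intro exI[of _ u]) (auto simp: u_def)
qed

lemma ray_exit_point:
  assumes x: "x \<in> P" and u: "\<forall>k\<ge>n. u k = 0" and "i < m" "lin_eval n (A i) u > 0"
  shows "\<exists>t\<ge>0. \<exists>i'<m. (\<lambda>k. x k + t * u k) \<in> P \<and> tight (\<lambda>k. x k + t * u k) i' \<and> lin_eval n (A i') u > 0"
proof -
  define I where "I = {i. i < m \<and> lin_eval n (A i) u > 0}"
  define r where "r = (\<lambda>i. - aff_eval n (A i) (B i) x / lin_eval n (A i) u)"
  define t where "t = Min (r ` I)"
  have I: "finite I" "I \<noteq> {}" using assms(3,4) by (auto simp: I_def)
  have "t \<in> r ` I" using Min_in[of "r ` I"] I by (simp add: t_def)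
  then obtain i' where i': "i' \<in> I" "t = r i'" by blast
  have t_le: "t \<le> r i" if "i \<in> I" for i using I that by (simp add: t_def)
  have x_row: "aff_eval n (A i) (B i) x \<le> 0" if "i < m" for i using x that by (simp add: polyhedron_def)
  have t0: "t \<ge> 0" using i' x_row[of i'] by (auto simp: I_def r_def divide_nonpos_pos)
  have "(\<lambda>k. x k + t * u k) \<in> P"
    unfolding polyhedron_def
  proof (intro CollectI conjI allI impI)
    fix i assume "n \<le> i" then show "x i + t * u i = 0" using x u by (simp add: polyhedron_def)
  next
    fix i assume i: "i < m"
    show "aff_eval n (A i) (B i) (\<lambda>k. x k + t * u k) \<le> 0"
    proof (cases "lin_eval n (A i) u > 0")
      case True
      then have "t * lin_eval n (A i) u \<le> r i * lin_eval n (A i) u"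
        using t_le i by (intro mult_right_mono) (auto simp: I_def)
      also have "\<dots> = - aff_eval n (A i) (B i) x" using True by (simp add: r_def)
      finally show ?thesis by (simp add: aff_eval_add_scaled)
    next
      case False
      then have "t * lin_eval n (A i) u \<le> 0" using t0 by (simp add: mult_nonneg_nonpos)
      then show ?thesis using x_row[OF i] by (simp add: aff_eval_add_scaled)
    qed
  qed
  moreover have "t * lin_eval n (A i') u = - aff_eval n (A i') (B i') x"
    using i' by (auto simp: r_def I_def)
  then have "tight (\<lambda>k. x k + t * u k) i'"
    by (simp add: tight_def aff_eval_add_scaled)
  ultimately show ?thesis using t0 i' by (auto simp: I_def)
qed

text \<open>Otherwise the ray from \<open>x\<close> in direction \<open>u\<close> would stay in the bounded set \<open>P\<close>.\<close>
lemma direction_increases_some_row: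
  assumes x: "x \<in> P" and u: "\<forall>k\<ge>n. u k = 0" and k: "k < n" "u k \<noteq> 0"
  shows "\<exists>i<m. lin_eval n (A i) u > 0"
proof (rule ccontr)
  assume "\<not> ?thesis"
  then have nonpos: "lin_eval n (A i) u \<le> 0" if "i < m" for i using that by auto
  obtain M where M: "\<forall>x\<in>P. \<forall>i<n. \<bar>x i\<bar> \<le> M" using bounded by blast
  define t where "t = (M + \<bar>x k\<bar> + 1) / \<bar>u k\<bar>"
  have "\<bar>x k\<bar> \<le> M" using M x k by blast
  then have t0: "t \<ge> 0" by (simp add: t_def)
  have "(\<lambda>j. x j + t * u j) \<in> P"
    unfolding polyhedron_def
  proof (intro CollectI conjI allI impI)
    fix i assume "n \<le> i" then show "x i + t * u i = 0" using x u by (simp add: polyhedron_def)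
  next
    fix i assume i: "i < m"
    have "t * lin_eval n (A i) u \<le> 0" using t0 nonpos[OF i] by (rule mult_nonneg_nonpos)
    moreover have "aff_eval n (A i) (B i) x \<le> 0" using x i by (simp add: polyhedron_def)
    ultimately show "aff_eval n (A i) (B i) (\<lambda>j. x j + t * u j) \<le> 0"
      unfolding aff_eval_add_scaled by linarith
  qed
  then have "\<forall>i<n. \<bar>x i + t * u i\<bar> \<le> M" by (rule bspec[OF M])
  then have "\<bar>x k + t * u k\<bar> \<le> M" using k by simp
  moreover have "\<bar>t * u k\<bar> = M + \<bar>x k\<bar> + 1"
    using t0 k by (simp add: t_def abs_mult)
  ultimately show False by linarith
qed

lemma direction_tightening_new_row:
  assumes x: "x \<in> P" and u: "\<forall>k\<ge>n. u k = 0" "k < n" "u k \<noteq> 0"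
    and c: "independent_rows c" "\<forall>p<length c. tight x (c!p)" "\<forall>p<length c. lin_eval n (A (c!p)) u = 0"
  shows "\<exists>t\<ge>0. (\<lambda>k. x k + t * u k) \<in> P \<and>
    (\<exists>i. independent_rows (c @ [i]) \<and> (\<forall>p<length (c @ [i]). tight (\<lambda>k. x k + t * u k) ((c @ [i]) ! p)))"
proof -
  obtain i where "i < m" "lin_eval n (A i) u > 0"
    using direction_increases_some_row[OF x u] by blast
  then obtain t i' where t: "t \<ge> 0" "i' < m" "(\<lambda>k. x k + t * u k) \<in> P"
      "tight (\<lambda>k. x k + t * u k) i'" "lin_eval n (A i') u > 0"
    using ray_exit_point[OF x u(1)] by blast
  have "independent_rows (c @ [i'])" using independent_rows_snoc[OF c(1) t(2) c(3)] t(5) by simp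
  moreover have "tight (\<lambda>k. x k + t * u k) ((c @ [i']) ! p)" if "p < length (c @ [i'])" for p
    using that c(2,3) t(4) by (cases "p < length c") (auto simp: tight_def aff_eval_add_scaled nth_append)
  ultimately show ?thesis using t by blast
qed

lemma face_contains_small_vertex:
  "x \<in> P \<Longrightarrow> independent_rows c \<Longrightarrow> \<forall>p<length c. tight x (c!p) \<Longrightarrow>
    \<exists>v\<in>P. small_rational_point n (vertex_bound n H) v \<and> (\<forall>p<length c. tight v (c!p))"
proof (induction "n - length c" arbitrary: c x rule: less_induct)
  case less
  show ?case
  proof (cases "length c < n")
    case False
    then show ?thesis using less.prems small_rational_point_if_tight by force
  next
    case True
    obtain u k where u: "\<forall>k\<ge>n. u k = 0" "k < n" "u k \<noteq> 0" "\<forall>p<length c. lin_eval n (A (c!p)) u = 0"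
      using exists_direction_orthogonal_rows[OF True] by blast
    obtain t i where "(\<lambda>k. x k + t * u k) \<in> P" "independent_rows (c @ [i])"
        "\<forall>p<length (c @ [i]). tight (\<lambda>k. x k + t * u k) ((c @ [i]) ! p)"
      using direction_tightening_new_row[OF less.prems(1) u(1-3) less.prems(2,3) u(4)] by blast
    moreover have "n - length (c @ [i]) < n - length c" using True by simp
    ultimately obtain v where v: "v \<in> P" "small_rational_point n (vertex_bound n H) v"
        "\<forall>p<length (c @ [i]). tight v ((c @ [i]) ! p)"
      using less.hyps by blast
    have "tight v (c!p)" if "p < length c" for p
      using v(3)[rule_format, of p] that by (simp add: nth_append)
    then show ?thesis using v(1,2) by blast
  qed
qed

text \<open>Caratheodory's theorem for the vertices: go from a vertex \<open>v\<^sub>0\<close> of the current face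
  through \<open>x\<close> until a further row becomes tight, and decompose that point in the smaller face.\<close>
lemma convex_comb_of_small_vertices:
  "x \<in> P \<Longrightarrow> independent_rows c \<Longrightarrow> \<forall>p<length c. tight x (c!p) \<Longrightarrow>
    \<exists>K \<mu> v. K \<le> n - length c \<and> (\<forall>s\<le>K. 0 \<le> \<mu> s \<and> v s \<in> P \<and> small_rational_point n (vertex_bound n H) (v s)) \<and>
      (\<Sum>s\<le>K. \<mu> s) = 1 \<and> (\<forall>k. x k = (\<Sum>s\<le>K. \<mu> s * v s k))"
proof (induction "n - length c" arbitrary: c x rule: less_induct)
  case less
  have trivial: ?case if "small_rational_point n (vertex_bound n H) x"
    using that less.prems(1) by (intro exI[of _ 0] exI[of _ "\<lambda>_. 1"] exI[of _ "\<lambda>_. x"]) auto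
  show ?case
  proof (cases "length c < n")
    case False
    then show ?thesis using trivial less.prems small_rational_point_if_tight by simp
  next
    case short: True
    obtain v\<^sub>0 where v\<^sub>0: "v\<^sub>0 \<in> P" "small_rational_point n (vertex_bound n H) v\<^sub>0"
        "\<forall>p<length c. tight v\<^sub>0 (c!p)"
      using face_contains_small_vertex[OF less.prems] by blast
    define u where "u = (\<lambda>k. x k - v\<^sub>0 k)"
    show ?thesis
    proof (cases "x = v\<^sub>0")
      case True
      then show ?thesis using trivial v\<^sub>0(2) by simp
    next
      case False
      then obtain k where k: "k < n" "u k \<noteq> 0"
        using polyhedron_ex_coord_neq[OF less.prems(1) v\<^sub>0(1)] by (auto simp: u_def)
      have u: "\<forall>k\<ge>n. u k = 0" using less.prems(1) v\<^sub>0(1) by (simp add: u_def polyhedron_def)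
      have u_orth: "\<forall>p<length c. lin_eval n (A (c!p)) u = 0"
        using less.prems(3) v\<^sub>0(3) by (simp add: u_def lin_eval_diff_tight)
      obtain t i where t: "t \<ge> 0" "(\<lambda>k. x k + t * u k) \<in> P" "independent_rows (c @ [i])"
          "\<forall>p<length (c @ [i]). tight (\<lambda>k. x k + t * u k) ((c @ [i]) ! p)"
        using direction_tightening_new_row[OF less.prems(1) u k less.prems(2,3) u_orth] by blast
      have "n - length (c @ [i]) < n - length c" using short by simp
      then obtain K \<mu> v where IH: "K \<le> n - length (c @ [i])"
          "\<forall>s\<le>K. 0 \<le> \<mu> s \<and> v s \<in> P \<and> small_rational_point n (vertex_bound n H) (v s)"
          "(\<Sum>s\<le>K. \<mu> s) = 1" "\<forall>k. x k + t * u k = (\<Sum>s\<le>K. \<mu> s * v s k)"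
        using less.hyps t(2-4) by blast
      have "\<forall>k. x k + t * (x k - v\<^sub>0 k) = (\<Sum>s\<le>K. \<mu> s * v s k)" using IH(4) by (simp add: u_def)
      then obtain \<mu>' v' where "\<forall>s\<le>Suc K. 0 \<le> \<mu>' s \<and> v' s \<in> insert v\<^sub>0 (v ` {..K})"
          "(\<Sum>s\<le>Suc K. \<mu>' s) = 1" "\<forall>k. x k = (\<Sum>s\<le>Suc K. \<mu>' s * v' s k)"
        using convex_comb_prepend[OF t(1) IH(3)] IH(2) by blast
      moreover have "Suc K \<le> n - length c" using IH(1) short by simp
      ultimately show ?thesis
        using IH(2) v\<^sub>0(1,2) by (intro exI[of _ "Suc K"] exI[of _ \<mu>'] exI[of _ v']) auto
    qed
  qed
qed

lemma abs_le_vertex_bound: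
  assumes "x \<in> P"
  shows "\<bar>x k\<bar> \<le> real (vertex_bound n H)"
proof -
  obtain K \<mu> v where "K \<le> n"
      "\<forall>s\<le>K. 0 \<le> \<mu> s \<and> v s \<in> P \<and> small_rational_point n (vertex_bound n H) (v s)"
      "(\<Sum>s\<le>K. \<mu> s) = 1" "\<forall>k. x k = (\<Sum>s\<le>K. \<mu> s * v s k)"
    using convex_comb_of_small_vertices[OF assms independent_rows_Nil, simplified] by blast
  then have "\<bar>\<Sum>s\<le>K. \<mu> s * v s k\<bar> \<le> real (vertex_bound n H)"
    by (intro abs_convex_comb_le) (auto intro: small_rational_point_abs_le)
  with \<open>\<forall>k. x k = _\<close> show ?thesis by simp
qed

lemma rational_point_near:
  assumes x: "x \<in> P" and N: "0 < N"
  shows "\<exists>p D. p \<in> P \<and> 1 \<le> D \<and> D \<le> int N * int (vertex_bound n H) ^ (n + 1) \<and>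
    (\<forall>k. p k * of_int D \<in> \<int>) \<and> (\<forall>k. \<bar>p k - x k\<bar> \<le> 2 * real n * real (vertex_bound n H) / real N)"
proof -
  let ?Bd = "vertex_bound n H"
  obtain K \<mu> v where K: "K \<le> n" and v: "\<forall>s\<le>K. 0 \<le> \<mu> s \<and> v s \<in> P \<and> small_rational_point n ?Bd (v s)"
    and \<mu>: "(\<Sum>s\<le>K. \<mu> s) = 1" and x_eq: "\<forall>k. x k = (\<Sum>s\<le>K. \<mu> s * v s k)"
    using convex_comb_of_small_vertices[OF x independent_rows_Nil, simplified] by blast
  obtain a where a: "(\<Sum>s\<le>K. a s) = N" "(\<Sum>s\<le>K. \<bar>real (a s) - real N * \<mu> s\<bar>) \<le> 2 * real K"
    using round_convex_weights[of K \<mu> N] v \<mu> by auto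
  define p where "p = (\<lambda>k. \<Sum>s\<le>K. real (a s) / real N * v s k)"
  have "p \<in> P" unfolding p_def
  proof (rule convex_comb_in_polyhedron)
    show "(\<Sum>s\<le>K. real (a s) / real N) = 1"
      using a(1) N by (simp flip: sum_divide_distrib of_nat_sum)
  qed (use v in auto)
  moreover obtain D where D: "1 \<le> D" "D \<le> int N * int ?Bd ^ (K + 1)" "\<forall>k. p k * of_int D \<in> \<int>"
    using convex_comb_common_denominator[of K n ?Bd v N a] v N unfolding p_def by blast
  moreover have "int N * int ?Bd ^ (K + 1) \<le> int N * int ?Bd ^ (n + 1)"
    using K vertex_bound_pos[of n H] by (intro mult_left_mono power_increasing) auto
  moreover have "\<bar>p k - x k\<bar> \<le> 2 * real n * real ?Bd / real N" for k
  proof -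
    have "p k = (\<Sum>s\<le>K. real (a s) * v s k) / real N"
      by (simp add: p_def sum_divide_distrib)
    moreover have "x k = (\<Sum>s\<le>K. real N * \<mu> s * v s k) / real N"
      using N x_eq by (simp add: sum_divide_distrib)
    ultimately have "p k - x k = (\<Sum>s\<le>K. (real (a s) - real N * \<mu> s) * v s k) / real N"
      by (simp add: diff_divide_distrib sum_subtractf left_diff_distrib)
    also have "\<bar>\<dots>\<bar> \<le> (\<Sum>s\<le>K. \<bar>real (a s) - real N * \<mu> s\<bar> * real ?Bd) / real N"
      unfolding abs_divide abs_of_nat
    proof (intro divide_right_mono order_trans[OF sum_abs sum_mono])
      fix s assume "s \<in> {..K}"
      then have "\<bar>v s k\<bar> \<le> real ?Bd" using v small_rational_point_abs_le by auto
      then show "\<bar>(real (a s) - real N * \<mu> s) * v s k\<bar> \<le> \<bar>real (a s) - real N * \<mu> s\<bar> * real ?Bd"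
        by (simp add: abs_mult mult_left_mono)
    qed simp
    also have "\<dots> \<le> 2 * real K * real ?Bd / real N"
      using a(2) by (simp add: divide_right_mono mult_right_mono flip: sum_distrib_right)
    also have "\<dots> \<le> 2 * real n * real ?Bd / real N"
      using K by (simp add: divide_right_mono mult_right_mono)
    finally show ?thesis .
  qed
  ultimately show ?thesis by (intro exI[of _ p] exI[of _ D]) auto
qed

text \<open>The rounding error \<open>2 n Bd / N\<close> changes each \<open>g\<^sub>j\<close> by at most \<open>1 / (l \<delta>)\<close>, by the Lipschitz bound
  on the box of radius \<open>Bd\<close> containing \<open>P\<close>.\<close>
lemma rational_point_in_relaxation:
  assumes x: "x \<in> P" "\<forall>j<l. poly_eval n d (G j) x \<le> 0"
    and G: "\<forall>j<l. \<forall>\<alpha>\<in>monomials_upto n d. \<bar>G j \<alpha>\<bar> \<le> int H"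
    and N: "0 < N" "2 * n * l * \<delta> * (d + 1) ^ n * H * d * vertex_bound n H ^ (d + 1) \<le> N"
  shows "\<exists>p D. p \<in> P \<and> (\<forall>j<l. real l * real \<delta> * poly_eval n d (G j) p \<le> 1) \<and>
    1 \<le> D \<and> D \<le> int N * int (vertex_bound n H) ^ (n + 1) \<and> (\<forall>k. p k * of_int D \<in> \<int>)"
proof -
  let ?Bd = "vertex_bound n H"
  define e where "e = 2 * real n * real ?Bd / real N"
  obtain p D where p: "p \<in> P" "1 \<le> D" "D \<le> int N * int ?Bd ^ (n + 1)" "\<forall>k. p k * of_int D \<in> \<int>"
    "\<forall>k. \<bar>p k - x k\<bar> \<le> e"
    using rational_point_near[OF x(1) N(1)] unfolding e_def by blast
  have "real l * real \<delta> * poly_eval n d (G j) p \<le> 1" if j: "j < l" for j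
  proof -
    let ?L = "real ((d + 1) ^ n) * real H * real d * real ?Bd ^ d"
    have "\<bar>poly_eval n d (G j) p - poly_eval n d (G j) x\<bar> \<le> ?L * e"
      using p(1,5) x(1) G j vertex_bound_pos[of n H]
      by (intro abs_poly_eval_diff_le) (auto simp: e_def abs_le_vertex_bound)
    then have "poly_eval n d (G j) p \<le> ?L * e" using x(2) j by auto
    then have "real l * real \<delta> * poly_eval n d (G j) p \<le> real l * real \<delta> * (?L * e)"
      by (simp add: mult_left_mono)
    also have "\<dots> = real (2 * n * l * \<delta> * (d + 1) ^ n * H * d * ?Bd ^ (d + 1)) / real N"
      by (simp add: e_def field_simps)
    also have "\<dots> \<le> 1"
    proof -
      have "real (2 * n * l * \<delta> * (d + 1) ^ n * H * d * ?Bd ^ (d + 1)) \<le> real N"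
        using N(2) by (simp only: of_nat_le_iff)
      then show ?thesis using N(1) by simp
    qed
    finally show ?thesis .
  qed
  with p show ?thesis by blast
qed

end

section \<open>Encoding sizes\<close>

lemma int_size_le:
  assumes "\<bar>z\<bar> \<le> 2 ^ F"
  shows "int_size z \<le> F + 2"
proof -
  have "real_of_int \<bar>z\<bar> \<le> 2 ^ F" using assms by (metis of_int_le_iff of_int_numeral of_int_power)
  moreover have "(2::real) ^ (F + 1) = 2 * 2 ^ F" by simp
  ultimately have "real_of_int \<bar>z\<bar> + 1 \<le> 2 ^ (F + 1)"
    using one_le_power[of "2::real" F] by linarith
  then have "log 2 (real_of_int \<bar>z\<bar> + 1) \<le> log 2 (2 ^ (F + 1))"
    by (subst log_le_cancel_iff) auto
  also have "\<dots> = real (F + 1)" by (subst log_pow_cancel) auto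
  finally have "log 2 (real_of_int \<bar>z\<bar> + 1) \<le> real (F + 1)" .
  then show ?thesis unfolding int_size_def by linarith
qed

lemma abs_div_gcd_le:
  fixes a b :: int
  assumes "0 < gcd a b"
  shows "\<bar>a div gcd a b\<bar> \<le> \<bar>a\<bar>"
proof -
  have "\<bar>a\<bar> = \<bar>a div gcd a b * gcd a b\<bar>" by simp
  also have "\<dots> = \<bar>a div gcd a b\<bar> * gcd a b" by (simp only: abs_mult abs_of_pos[OF assms])
  also have "\<bar>a div gcd a b\<bar> * 1 \<le> \<dots>"
    using assms by (intro mult_left_mono) (linarith, simp)
  finally show ?thesis by simp
qed

lemma rat_size_Fract_le:
  assumes "0 < b" "\<bar>a\<bar> \<le> 2 ^ F" "b \<le> 2 ^ E"
  shows "rat_size (Rat.Fract a b) \<le> F + E + 4"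
proof -
  have g: "0 < gcd a b" using assms(1) by simp
  have "quotient_of (Rat.Fract a b) = (a div gcd a b, b div gcd a b)"
    using assms(1) by (simp add: quotient_of_Fract normalize_def Let_def)
  moreover have "int_size (a div gcd a b) \<le> F + 2"
    using abs_div_gcd_le[OF g] assms(2) by (intro int_size_le) simp
  moreover have "int_size (b div gcd a b) \<le> E + 2"
    using abs_div_gcd_le[of b a] g assms(1,3) by (intro int_size_le) (simp add: gcd.commute)
  ultimately show ?thesis by (simp add: rat_size_def)
qed

lemma vec_size_le_common_denominator:
  assumes "\<forall>k<n. q k = Rat.Fract (w k) D" "0 < D" "D \<le> 2 ^ E" "\<forall>k<n. \<bar>w k\<bar> \<le> 2 ^ F"
  shows "vec_size n q \<le> n * (F + E + 5)"
proof -
  have "(\<Sum>k<n. rat_size (q k)) \<le> (\<Sum>k<n. F + E + 4)"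
    using assms by (intro sum_mono) (simp add: rat_size_Fract_le)
  then show ?thesis by (simp add: vec_size_def algebra_simps)
qed

lemma exists_rat_vector_common_denominator:
  fixes p :: "nat \<Rightarrow> real" and D :: int
  assumes p: "\<forall>k\<ge>n. p k = 0" "\<forall>k. p k * of_int D \<in> \<int>" "\<forall>k. \<bar>p k\<bar> \<le> 2 ^ F"
    and D: "1 \<le> D" "D \<le> 2 ^ E"
  shows "\<exists>q. (\<lambda>i. real_of_rat (q i)) = p \<and> vec_size n q \<le> n * (F + 2 * E + 5)"
proof -
  define w where "w = (\<lambda>k. \<lfloor>p k * of_int D\<rfloor>)"
  have w: "real_of_int (w k) = p k * of_int D" for k
    using p(2) by (auto simp: w_def elim!: Ints_cases)
  define q where "q = (\<lambda>k. if k < n then Rat.Fract (w k) D else 0)"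
  have "(\<lambda>i. real_of_rat (q i)) = p"
  proof
    fix k show "real_of_rat (q k) = p k"
      using D(1) w[of k] p(1) by (cases "k < n") (simp_all add: q_def of_rat_rat)
  qed
  moreover have "\<bar>w k\<bar> \<le> 2 ^ (F + E)" for k
  proof -
    have "real_of_int \<bar>w k\<bar> = \<bar>p k\<bar> * of_int D" using w[of k] D(1) by (simp add: abs_mult)
    also have "\<dots> \<le> 2 ^ F * 2 ^ E"
    proof (rule mult_mono)
      show "real_of_int D \<le> 2 ^ E" using D(2) by (metis of_int_le_iff of_int_numeral of_int_power)
    qed (use p(3) D(1) in auto)
    finally show ?thesis by (metis of_int_le_iff of_int_numeral of_int_power power_add)
  qed
  then have "vec_size n q \<le> n * ((F + E) + E + 5)"
    using D by (intro vec_size_le_common_denominator) (auto simp: q_def)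
  ultimately show ?thesis by (intro exI[of _ q]) (simp add: algebra_simps)
qed

lemma vertex_bound_le_pow2:
  assumes "n \<le> s" "H + 1 \<le> 2 ^ s"
  shows "vertex_bound n H \<le> 2 ^ (2 * s * s)"
proof -
  have "fact n \<le> n ^ n" using fact_le_power[of n, where 'a=nat] by simp
  also have "\<dots> \<le> (2 ^ s) ^ n" using assms(1) less_exp[of s] by (intro power_mono) linarith+
  finally have "vertex_bound n H \<le> (2 ^ s) ^ n * (2 ^ s) ^ n"
    unfolding vertex_bound_def using assms(2) by (intro mult_le_mono power_mono) auto
  also have "\<dots> = 2 ^ (2 * s * n)" by (simp flip: power_mult power_add)
  also have "\<dots> \<le> 2 ^ (2 * s * s)" using assms(1) by (intro power_increasing) auto
  finally show ?thesis .
qed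

lemma vertex_bound_power_le_pow2:
  assumes "n \<le> s" "H + 1 \<le> 2 ^ s" "k \<le> 2 * s"
  shows "vertex_bound n H ^ k \<le> 2 ^ (4 * s ^ 3)"
proof -
  have "vertex_bound n H ^ k \<le> (2 ^ (2 * s * s)) ^ k"
    using vertex_bound_le_pow2[OF assms(1,2)] by (rule power_mono) simp
  also have "\<dots> = 2 ^ (2 * s * s * k)" by (simp add: power_mult)
  also have "\<dots> \<le> 2 ^ (4 * s ^ 3)"
    using assms(3) by (intro power_increasing) (auto simp: power3_eq_cube)
  finally show ?thesis .
qed

definition rounding_modulus :: "nat \<Rightarrow> nat \<Rightarrow> nat \<Rightarrow> nat \<Rightarrow> nat \<Rightarrow> nat" where
  "rounding_modulus n l d H \<delta> = 2 * (n + 1) * (l + 1) * \<delta> * (d + 1) ^ n * (H + 1) * d * vertex_bound n H ^ (d + 1)"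

lemma rounding_modulus_le_pow2:
  assumes "n \<le> s" "d \<le> s" "1 \<le> s" "l + 1 \<le> 2 ^ s" "H + 1 \<le> 2 ^ s" "\<delta> + 1 \<le> 2 ^ s"
  shows "rounding_modulus n l d H \<delta> \<le> 2 ^ (11 * s ^ 3)"
proof -
  have small: "j + 1 \<le> 2 ^ s" if "j \<le> s" for j
  proof -
    have "2 ^ j \<le> (2::nat) ^ s" using that by (simp add: power_increasing)
    then show ?thesis using less_exp[of j] by linarith
  qed
  have "(d + 1) ^ n \<le> (2 ^ s) ^ s"
    using small[OF assms(2)] assms(1) by (intro order_trans[OF power_mono power_increasing]) auto
  then have "rounding_modulus n l d H \<delta>
      \<le> 2 ^ s * 2 ^ s * 2 ^ s * 2 ^ s * (2 ^ s) ^ s * 2 ^ s * 2 ^ s * 2 ^ (4 * s ^ 3)"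
    unfolding rounding_modulus_def
    using small[OF assms(1)] small[OF assms(2)] small[OF order_refl] assms(3-6)
      vertex_bound_power_le_pow2[OF assms(1,5), of "d + 1"] assms(2)
    by (intro mult_le_mono) auto
  also have "\<dots> = 2 ^ (6 * s + s * s + 4 * s ^ 3)" by (simp flip: power_add power_mult)
  also have "\<dots> \<le> 2 ^ (11 * s ^ 3)"
  proof (rule power_increasing)
    have "s \<le> s ^ 3" "s * s \<le> s ^ 3" using assms(3) by (simp_all add: power3_eq_cube)
    then show "6 * s + s * s + 4 * s ^ 3 \<le> 11 * s ^ 3" by linarith
  qed simp
  finally show ?thesis .
qed

lemma denominator_le_pow2:
  assumes "n \<le> s" "d \<le> s" "1 \<le> s" "l + 1 \<le> 2 ^ s" "H + 1 \<le> 2 ^ s" "\<delta> + 1 \<le> 2 ^ s"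
  shows "int (rounding_modulus n l d H \<delta>) * int (vertex_bound n H) ^ (n + 1) \<le> 2 ^ (15 * s ^ 3)"
proof -
  have "n + 1 \<le> 2 * s" using assms(1,3) by linarith
  then have "rounding_modulus n l d H \<delta> * vertex_bound n H ^ (n + 1) \<le> 2 ^ (11 * s ^ 3) * 2 ^ (4 * s ^ 3)"
    by (intro mult_le_mono rounding_modulus_le_pow2 vertex_bound_power_le_pow2 assms)
  then have "rounding_modulus n l d H \<delta> * vertex_bound n H ^ (n + 1) \<le> 2 ^ (15 * s ^ 3)"
    by (simp flip: power_add)
  then have "int (rounding_modulus n l d H \<delta> * vertex_bound n H ^ (n + 1)) \<le> int (2 ^ (15 * s ^ 3))"
    by (simp only: of_nat_le_iff)
  then show ?thesis by simp
qed

lemma nat_ceiling_log2: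
  "x + 1 \<le> 2 ^ nat \<lceil>log 2 (real x + 1)\<rceil> \<and> real (nat \<lceil>log 2 (real x + 1)\<rceil>) \<le> log 2 (real x + 1) + 1"
proof -
  let ?L = "log 2 (real x + 1)"
  have L: "0 \<le> ?L" by simp
  then have c: "real (nat \<lceil>?L\<rceil>) = of_int \<lceil>?L\<rceil>" by simp
  have "real x + 1 = 2 powr ?L" by simp
  also have "\<dots> \<le> 2 powr real (nat \<lceil>?L\<rceil>)" using c le_of_int_ceiling[of ?L] by (intro powr_mono) auto
  also have "\<dots> = 2 ^ nat \<lceil>?L\<rceil>" by (rule powr_realpow) simp
  finally have "real (x + 1) \<le> real (2 ^ nat \<lceil>?L\<rceil>)" by simp
  then show ?thesis unfolding c of_nat_le_iff by (simp add: of_int_ceiling_le_add_one)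
qed

lemma exists_small_point_in_relaxation:
  fixes A :: "nat \<Rightarrow> nat \<Rightarrow> int" and B :: "nat \<Rightarrow> int" and G :: "nat \<Rightarrow> (nat \<Rightarrow> nat) \<Rightarrow> int"
  assumes d: "1 \<le> d" and \<delta>: "1 \<le> \<delta>"
    and AB: "\<forall>i<m. (\<forall>k<n. \<bar>A i k\<bar> \<le> int H) \<and> \<bar>B i\<bar> \<le> int H"
    and G: "\<forall>j<l. \<forall>\<alpha>\<in>monomials_upto n d. \<bar>G j \<alpha>\<bar> \<le> int H"
    and bounded: "\<exists>M. \<forall>x\<in>polyhedron n m A B. \<forall>i<n. \<bar>x i\<bar> \<le> M"
    and x: "x \<in> polyhedron n m A B" "\<forall>j<l. poly_eval n d (G j) x \<le> 0"
    and s: "n \<le> s" "d \<le> s" "l + 1 \<le> 2 ^ s" "H + 1 \<le> 2 ^ s" "\<delta> + 1 \<le> 2 ^ s"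
  shows "\<exists>q. (\<lambda>i. real_of_rat (q i)) \<in> polyhedron n m A B \<and>
    (\<forall>j<l. real l * real \<delta> * poly_eval n d (G j) (\<lambda>i. real_of_rat (q i)) \<le> 1) \<and>
    vec_size n q \<le> 37 * s ^ 4"
proof -
  interpret bounded_polyhedron n m A B H
    using AB bounded by unfold_locales auto
  let ?Bd = "vertex_bound n H" and ?N = "rounding_modulus n l d H \<delta>"
  have s1: "1 \<le> s" using d s(2) by simp
  have "0 < ?N" using d \<delta> vertex_bound_pos[of n H] by (simp add: rounding_modulus_def)
  moreover have "2 * n * l * \<delta> * (d + 1) ^ n * H * d * ?Bd ^ (d + 1) \<le> ?N"
    unfolding rounding_modulus_def by (intro mult_le_mono) auto
  ultimately obtain p D where p: "p \<in> P" "\<forall>j<l. real l * real \<delta> * poly_eval n d (G j) p \<le> 1"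
    and D: "1 \<le> D" "D \<le> int ?N * int ?Bd ^ (n + 1)" "\<forall>k. p k * of_int D \<in> \<int>"
    using rational_point_in_relaxation[OF x G] by blast
  have "D \<le> 2 ^ (15 * s ^ 3)" using D(2) denominator_le_pow2[OF s(1,2) s1 s(3-5)] by linarith
  moreover have "\<bar>p k\<bar> \<le> 2 ^ (2 * s * s)" for k
  proof -
    have "real ?Bd \<le> real (2 ^ (2 * s * s))"
      using vertex_bound_le_pow2[OF s(1,4)] by (simp only: of_nat_le_iff)
    then have "real ?Bd \<le> 2 ^ (2 * s * s)" by simp
    then show ?thesis using abs_le_vertex_bound[OF p(1), of k] by linarith
  qed
  moreover have "\<forall>k\<ge>n. p k = 0" using p(1) by (simp add: polyhedron_def)
  ultimately obtain q where q: "(\<lambda>i. real_of_rat (q i)) = p"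
      "vec_size n q \<le> n * (2 * s * s + 2 * (15 * s ^ 3) + 5)"
    using exists_rat_vector_common_denominator[of n p D] D(1,3) by blast
  have "n * (2 * s * s + 2 * (15 * s ^ 3) + 5) \<le> s * (37 * s ^ 3)"
  proof (rule mult_le_mono[OF s(1)])
    have "s * s \<le> s ^ 3" "1 \<le> s ^ 3" using s1 by (simp_all add: power3_eq_cube)
    then show "2 * s * s + 2 * (15 * s ^ 3) + 5 \<le> 37 * s ^ 3" by linarith
  qed
  then have "vec_size n q \<le> 37 * s ^ 4" using q(2) by (simp add: power_numeral_reduce)
  with p q(1) show ?thesis by auto
qed

lemma exists_size_parameter:
  fixes n d l H \<delta> :: nat
  assumes d: "1 \<le> d"
  shows "\<exists>s. n \<le> s \<and> d \<le> s \<and> l + 1 \<le> 2 ^ s \<and> H + 1 \<le> 2 ^ s \<and> \<delta> + 1 \<le> 2 ^ s \<and>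
    37 * real s ^ 4 \<le> 9472 * (real n + real d + log 2 (real l + 1) + log 2 (real H + 1) + log 2 (real \<delta> + 1)) ^ 4"
proof -
  let ?L = "\<lambda>x::nat. nat \<lceil>log 2 (real x + 1)\<rceil>"
  define s where "s = n + d + ?L l + ?L H + ?L \<delta>"
  define \<sigma> where "\<sigma> = real n + real d + log 2 (real l + 1) + log 2 (real H + 1) + log 2 (real \<delta> + 1)"
  have pow: "x + 1 \<le> 2 ^ s" if "?L x \<le> s" for x
    by (rule order_trans[OF conjunct1[OF nat_ceiling_log2] power_increasing[OF that]]) simp
  have "l + 1 \<le> 2 ^ s" by (rule pow) (unfold s_def, linarith)
  moreover have "H + 1 \<le> 2 ^ s" by (rule pow) (unfold s_def, linarith)
  moreover have "\<delta> + 1 \<le> 2 ^ s" by (rule pow) (unfold s_def, linarith)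
  moreover have L: "real (?L x) \<le> log 2 (real x + 1) + 1" "0 \<le> log 2 (real x + 1)" for x
    using nat_ceiling_log2[of x] by simp_all
  have "1 \<le> real d" "0 \<le> real n" using d by simp_all
  then have "real s \<le> 4 * \<sigma>"
    unfolding s_def \<sigma>_def of_nat_add using L[of l] L[of H] L[of \<delta>] by argo
  then have "37 * real s ^ 4 \<le> 9472 * \<sigma> ^ 4"
    using power_mono[of "real s" "4 * \<sigma>" 4] by (simp add: power_mult_distrib)
  ultimately show ?thesis unfolding \<sigma>_def by (intro exI[of _ s]) (simp add: s_def)
qed

theorem proposition2:
  shows "\<exists>(C::real) (k::nat). \<forall>(n::nat) (m::nat) (l::nat) (d::nat) (H::nat) (\<delta>::nat)
     (A :: nat \<Rightarrow> nat \<Rightarrow> int) (B :: nat \<Rightarrow> int) (G :: nat \<Rightarrow> (nat \<Rightarrow> nat) \<Rightarrow> int).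
     d \<ge> 1 \<longrightarrow> \<delta> \<ge> 1 \<longrightarrow>
     (\<forall>i<m. \<exists>k<n. A i k \<noteq> 0) \<longrightarrow>
     (\<forall>i<m. (\<forall>k<n. \<bar>A i k\<bar> \<le> int H) \<and> \<bar>B i\<bar> \<le> int H) \<longrightarrow>
     (\<forall>j<l. \<forall>\<alpha>\<in>monomials_upto n d. \<bar>G j \<alpha>\<bar> \<le> int H) \<longrightarrow>
     (let P = {x :: nat \<Rightarrow> real. (\<forall>i\<ge>n. x i = 0) \<and> (\<forall>i<m. aff_eval n (A i) (B i) x \<le> 0)};
          R = {x \<in> P. \<forall>j<l. poly_eval n d (G j) x \<le> 0};
          S = {x \<in> P. \<forall>j<l. real l * real \<delta> * poly_eval n d (G j) x \<le> 1}
      in (\<exists>M. \<forall>x\<in>P. \<forall>i<n. \<bar>x i\<bar> \<le> M) \<longrightarrow> R \<noteq> {} \<longrightarrow>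
         (\<exists>q :: nat \<Rightarrow> rat. (\<lambda>i. real_of_rat (q i)) \<in> S \<and>
            real (vec_size n q) \<le> C * (real n + real d + log 2 (real l + 1)
                + log 2 (real H + 1) + log 2 (real \<delta> + 1)) ^ k))"
proof (unfold Let_def polyhedron_def[symmetric], intro exI[of _ "9472::real"] exI[of _ "4::nat"] allI impI)
  fix n m l d H \<delta> :: nat and A :: "nat \<Rightarrow> nat \<Rightarrow> int" and B :: "nat \<Rightarrow> int"
    and G :: "nat \<Rightarrow> (nat \<Rightarrow> nat) \<Rightarrow> int"
  assume d: "d \<ge> 1" and \<delta>: "\<delta> \<ge> 1"
    and "\<forall>i<m. \<exists>k<n. A i k \<noteq> 0" \<comment> \<open>not needed: zero rows are harmless\<close>
    and AB: "\<forall>i<m. (\<forall>k<n. \<bar>A i k\<bar> \<le> int H) \<and> \<bar>B i\<bar> \<le> int H"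
    and G: "\<forall>j<l. \<forall>\<alpha>\<in>monomials_upto n d. \<bar>G j \<alpha>\<bar> \<le> int H"
    and bounded: "\<exists>M. \<forall>x\<in>polyhedron n m A B. \<forall>i<n. \<bar>x i\<bar> \<le> M"
    and "{x \<in> polyhedron n m A B. \<forall>j<l. poly_eval n d (G j) x \<le> 0} \<noteq> {}"
  then obtain x where x: "x \<in> polyhedron n m A B" "\<forall>j<l. poly_eval n d (G j) x \<le> 0" by blast
  obtain s where s: "n \<le> s" "d \<le> s" "l + 1 \<le> 2 ^ s" "H + 1 \<le> 2 ^ s" "\<delta> + 1 \<le> 2 ^ s"
    and s_le: "37 * real s ^ 4 \<le> 9472 * (real n + real d + log 2 (real l + 1)
      + log 2 (real H + 1) + log 2 (real \<delta> + 1)) ^ 4"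
    using exists_size_parameter[OF d] by blast
  obtain q where q: "(\<lambda>i. real_of_rat (q i)) \<in> polyhedron n m A B"
      "\<forall>j<l. real l * real \<delta> * poly_eval n d (G j) (\<lambda>i. real_of_rat (q i)) \<le> 1"
      "vec_size n q \<le> 37 * s ^ 4"
    using exists_small_point_in_relaxation[OF d \<delta> AB G bounded x s] by blast
  have "real (vec_size n q) \<le> 37 * real s ^ 4"
    using q(3) of_nat_le_iff[of "vec_size n q" "37 * s ^ 4", where 'a=real] by simp
  with q(1,2) s_le show "\<exists>q. (\<lambda>i. real_of_rat (q i))
      \<in> {x \<in> polyhedron n m A B. \<forall>j<l. real l * real \<delta> * poly_eval n d (G j) x \<le> 1} \<and>
      real (vec_size n q) \<le> 9472 * (real n + real d + log 2 (real l + 1)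
        + log 2 (real H + 1) + log 2 (real \<delta> + 1)) ^ 4"
    by (intro exI[of _ q]) auto
qed

end
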